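(* Let $k\ge1$ and suppose $\delta\notin\bigcup_{j=1}^kI_j$, where $I_j=\{-\frac{p}{2(n+1)}:p\in\{j-1,\dots,2j-2\}\}$. Then \[R^k=\bigoplus_{l=0}^k s^l\big(R^{k-l}\cap\ker i(\alpha)\big),\] where $s^l:R^{k-l}\to R^k$ denotes the composite $s_{k-1}\circ s_{k-2}\circ\cdots\circ s_{k-l}$ ($s^0=\mathrm{Id}$), and for $j\ge1$, $s_{j-1}:R^{j-1}\to R^j$ is $s_{j-1}(S)=-\sum_{l=1}^jb_{j,l}X^l(i(\alpha)^{l-1}(S))$ with $b_{j,l}=\big(\prod_{m=1}^l(-r(m,j-m))\big)^{-1}$.
   Context: Let $n\ge1$, $M=\mathbb{R}^{2n+1}$ with coordinates $(q^1,\dots,q^n,p^1,\dots,p^n,t)$. For $\mu\in\mathbb{R}$, $\mathcal{S}^k_\mu$ denotes the space of smooth functions $S(x,\xi)$ on $M\times\mathbb{R}^{2n+1}$ homogeneous polynomial of degree $k$ in $\xi=(\xi_{q^1},\dots,\xi_{q^n},\xi_{p^1},\dots,\xi_{p^n},\xi_t)$. Fix $\delta\in\mathbb{R}$ and set $R^k=\mathcal{S}^k_{\delta+\frac{k}{n+1}}$ for $k\ge0$, $R^{j}=0$ for $j<0$. Let $E_s=\sum_i(p^i\partial_{p^i}+q^i\partial_{q^i})$, $\langle E_s,\xi\rangle=\sum_i(p^i\xi_{p^i}+q^i\xi_{q^i})$, $D(S)=\sum_i(\xi_{q^i}\partial_{p^i}S-\xi_{p^i}\partial_{q^i}S)+\xi_tE_s(S)-\langle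 E_s,\xi\rangle\partial_tS$. Operators: $i(\alpha):R^k\to R^{k-1}$, $i(\alpha)(S)=\frac12\big(\sum_i(p^i\partial_{\xi_{q^i}}S-q^i\partial_{\xi_{p^i}}S)-\partial_{\xi_t}S\big)$; $X:R^k\to R^{k+1}$, $X(S)=D(S)+(2(n+1)\delta+k)\xi_tS$. Set $r(l,k)=-\frac{l}{2}\big(2(n+1)\delta+2k+l-1\big)$. *)

theory Defs
  imports "HOL-Analysis.Analysis" "HOL-Library.Function_Algebras"
begin

text \<open>Points of M = R^(2n+1) are triples (q, p, t) with q, p :: real^'n, where n = CARD('n).
  Covectors xi = (xi_q, xi_p, xi_t) have the same shape. A symbol is a function S x xi.\<close>

type_synonym 'n pt = "(real^'n) \<times> (real^'n) \<times> real"
type_synonym 'n sym = "'n pt \<Rightarrow> 'n pt \<Rightarrow> real"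

definition qc :: "'n::finite pt \<Rightarrow> 'n \<Rightarrow> real" where "qc x i = fst x $ i"
definition pc :: "'n::finite pt \<Rightarrow> 'n \<Rightarrow> real" where "pc x i = fst (snd x) $ i"
definition tc :: "'n::finite pt \<Rightarrow> real" where "tc x = snd (snd x)"

definition eq :: "'n::finite \<Rightarrow> 'n pt" where "eq i = (axis i 1, 0, 0)"
definition ep :: "'n::finite \<Rightarrow> 'n pt" where "ep i = (0, axis i 1, 0)"
definition et :: "'n::finite pt" where "et = (0, 0, 1)"

definition dd :: "'a::real_normed_vector \<Rightarrow> ('a \<Rightarrow> real) \<Rightarrow> 'a \<Rightarrow> real" where
  "dd v f x = deriv (\<lambda>h. f (x + h *\<^sub>R v)) 0"

fun iter_dd :: "'a::real_normed_vector list \<Rightarrow> ('a \<Rightarrow> real) \<Rightarrow> 'a \<Rightarrow> real" where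
  "iter_dd [] f = f"
| "iter_dd (v # vs) f = dd v (iter_dd vs f)"

definition smooth :: "('a::real_normed_vector \<Rightarrow> real) \<Rightarrow> bool" where
  "smooth f \<longleftrightarrow> (\<forall>vs x. iter_dd vs f differentiable (at x))"

text \<open>Multi-indices (a, b, c) for the monomial xi_q^a xi_p^b xi_t^c.\<close>
definition mdeg :: "('n::finite \<Rightarrow> nat) \<times> ('n \<Rightarrow> nat) \<times> nat \<Rightarrow> nat" where
  "mdeg m = (case m of (a, b, c) \<Rightarrow> sum a UNIV + sum b UNIV + c)"

definition mono :: "('n::finite \<Rightarrow> nat) \<times> ('n \<Rightarrow> nat) \<times> nat \<Rightarrow> 'n pt \<Rightarrow> real" where
  "mono m xi = (case m of (a, b, c) \<Rightarrow>
     (\<Prod>i\<in>UNIV. qc xi i ^ a i) * (\<Prod>i\<in>UNIV. pc xi i ^ b i) * tc xi ^ c)"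

text \<open>R^k: smooth functions homogeneous polynomial of degree k in xi
  (the density weight does not affect the underlying space of functions).\<close>
definition inR :: "nat \<Rightarrow> 'n::finite sym \<Rightarrow> bool" where
  "inR k S \<longleftrightarrow> (\<exists>a. (\<forall>m. smooth (a m)) \<and>
      (\<forall>x xi. S x xi = (\<Sum>m\<in>{m. mdeg m = k}. a m x * mono m xi)))"

definition pdx :: "'n::finite pt \<Rightarrow> 'n sym \<Rightarrow> 'n sym" where
  "pdx v S x xi = dd v (\<lambda>y. S y xi) x"
definition pdxi :: "'n::finite pt \<Rightarrow> 'n sym \<Rightarrow> 'n sym" where
  "pdxi v S x xi = dd v (\<lambda>eta. S x eta) xi"

definition ialpha :: "'n::finite sym \<Rightarrow> 'n sym" where
  "ialpha S x xi = 1/2 * ((\<Sum>i\<in>UNIV. pc x i * pdxi (eq i) S x xi - qc x i * pdxi (ep i) S x xi)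
                          - pdxi et S x xi)"

definition Es :: "'n::finite sym \<Rightarrow> 'n sym" where
  "Es S x xi = (\<Sum>i\<in>UNIV. pc x i * pdx (ep i) S x xi + qc x i * pdx (eq i) S x xi)"

definition Es_xi :: "'n::finite pt \<Rightarrow> 'n pt \<Rightarrow> real" where
  "Es_xi x xi = (\<Sum>i\<in>UNIV. pc x i * pc xi i + qc x i * qc xi i)"

definition Dop :: "'n::finite sym \<Rightarrow> 'n sym" where
  "Dop S x xi = (\<Sum>i\<in>UNIV. qc xi i * pdx (ep i) S x xi - pc xi i * pdx (eq i) S x xi)
     + tc xi * Es S x xi - Es_xi x xi * pdx et S x xi"

definition Xop :: "real \<Rightarrow> nat \<Rightarrow> 'n::finite sym \<Rightarrow> 'n sym" where
  "Xop \<delta> k S x xi = Dop S x xi + (2 * (real CARD('n) + 1) * \<delta> + real k) * tc xi * S x xi"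

fun Xpow :: "real \<Rightarrow> nat \<Rightarrow> nat \<Rightarrow> 'n::finite sym \<Rightarrow> 'n sym" where
  "Xpow \<delta> m 0 S = S"
| "Xpow \<delta> m (Suc l) S = Xop \<delta> (m + l) (Xpow \<delta> m l S)"

definition rr :: "nat \<Rightarrow> real \<Rightarrow> real \<Rightarrow> real \<Rightarrow> real" where
  "rr n \<delta> l k = - (l / 2) * (2 * (real n + 1) * \<delta> + 2 * k + l - 1)"

definition bb :: "nat \<Rightarrow> real \<Rightarrow> nat \<Rightarrow> nat \<Rightarrow> real" where
  "bb n \<delta> j l = inverse (\<Prod>m\<in>{1..l}. - rr n \<delta> (real m) (real j - real m))"

text \<open>smap \<delta> m = s_m : R^m \<rightarrow> R^(m+1) (here j = m+1).\<close>
definition smap :: "real \<Rightarrow> nat \<Rightarrow> 'n::finite sym \<Rightarrow> 'n sym" where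
  "smap \<delta> m S x xi = - (\<Sum>l\<in>{1..m+1}. bb CARD('n) \<delta> (m+1) l *
                     Xpow \<delta> (m + 1 - l) l ((ialpha ^^ (l - 1)) S) x xi)"

fun spow :: "real \<Rightarrow> nat \<Rightarrow> nat \<Rightarrow> 'n::finite sym \<Rightarrow> 'n sym" where
  "spow \<delta> k 0 = id"
| "spow \<delta> k (Suc l) = smap \<delta> (k - 1) \<circ> spow \<delta> (k - 1) l"

definition Wsum :: "real \<Rightarrow> nat \<Rightarrow> nat \<Rightarrow> 'n::finite sym set" where
  "Wsum \<delta> k l = spow \<delta> k l ` {S. inR (k - l) S \<and> ialpha S = 0}"

end

theory Submission
  imports Defs
begin

text \<open>
  On \<open>R\<^sup>k\<close>, \<open>i(\<alpha>)\<close> is the derivative in \<open>\<xi>\<close> along the vector \<open>alpha_field x\<close>, and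
  \<open>D\<close> is the derivative in \<open>x\<close> along the vector \<open>D_field x \<xi>\<close>, which is linear in \<open>\<xi>\<close>.
  So their commutator is the Lie bracket of the two fields; with the Euler identity this gives
  \<open>i(\<alpha>) X = X i(\<alpha>) - ((n + 1) \<delta> + k)\<close> on \<open>R\<^sup>k\<close> and, by induction,
  \<open>i(\<alpha>) X^l = X^l i(\<alpha>) + r(l, \<mu>) X^(l-1)\<close> on \<open>R\<^sup>\<mu>\<close>. The hypothesis on \<open>\<delta>\<close> says exactly
  that \<open>r(l, j - l) \<noteq> 0\<close> for \<open>1 \<le> l \<le> j \<le> k\<close>; then \<open>i(\<alpha>) (s_(j-1) S)\<close> is a telescoping sum
  equal to \<open>S\<close>. This right inverse splits \<open>R\<^sup>j\<close> as \<open>ker i(\<alpha>)\<close> plus the image of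
  \<open>s_(j-1)\<close>, and iterating the splitting gives the decomposition.
\<close>


section \<open>Directional derivatives and smooth functions\<close>

lemma has_derivative_dd:
  assumes "(f has_derivative F) (at x)"
  shows "dd v f x = F v"
proof -
  have "((\<lambda>h::real. x + h *\<^sub>R v) has_derivative (\<lambda>h. h *\<^sub>R v)) (at 0)"
    by (auto intro!: derivative_eq_intros)
  then have "((\<lambda>h. f (x + h *\<^sub>R v)) has_derivative (\<lambda>h. F (h *\<^sub>R v))) (at 0)"
    using has_derivative_compose assms by fastforce
  moreover have "(\<lambda>h. F (h *\<^sub>R v)) = (\<lambda>h. F v * h)"
    using linear_scale[OF has_derivative_linear[OF assms]] by (auto simp: mult.commute)
  ultimately have "((\<lambda>h. f (x + h *\<^sub>R v)) has_field_derivative F v) (at 0)"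
    by (simp add: has_field_derivative_def)
  then show ?thesis
    unfolding dd_def by (rule DERIV_imp_deriv)
qed

lemma linear_dd:
  assumes "f differentiable (at x)"
  shows "linear (\<lambda>v. dd v f x)"
proof -
  obtain F where F: "(f has_derivative F) (at x)"
    using assms by (auto simp: differentiable_def)
  then have "(\<lambda>v. dd v f x) = F"
    using has_derivative_dd by blast
  with has_derivative_linear[OF F] show ?thesis by simp
qed

lemma dd_Basis_expansion:
  fixes f :: "'a::euclidean_space \<Rightarrow> real"
  assumes "f differentiable (at x)"
  shows "dd v f x = (\<Sum>b\<in>Basis. (v \<bullet> b) * dd b f x)"
  using linear_sum[OF linear_dd[OF assms], of "\<lambda>b. (v \<bullet> b) *\<^sub>R b" Basis]
    linear_scale[OF linear_dd[OF assms]]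
  by (simp add: euclidean_representation)

lemma dd_zero_dir [simp]: "dd 0 f x = 0"
  by (simp add: dd_def)

lemma dd_add:
  assumes "f differentiable (at x)" "g differentiable (at x)"
  shows "dd v (\<lambda>y. f y + g y) x = dd v f x + dd v g x"
proof -
  obtain F G where "(f has_derivative F) (at x)" "(g has_derivative G) (at x)"
    using assms by (auto simp: differentiable_def)
  then show ?thesis
    using has_derivative_add has_derivative_dd by metis
qed

lemma dd_mult:
  fixes f g :: "'a::real_normed_vector \<Rightarrow> real"
  assumes "f differentiable (at x)" "g differentiable (at x)"
  shows "dd v (\<lambda>y. f y * g y) x = dd v f x * g x + f x * dd v g x"
proof -
  obtain F G where FG: "(f has_derivative F) (at x)" "(g has_derivative G) (at x)"
    using assms by (auto simp: differentiable_def)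
  then have "dd v (\<lambda>y. f y * g y) x = f x * G v + F v * g x"
    by (intro has_derivative_dd has_derivative_mult)
  with has_derivative_dd[OF FG(1)] has_derivative_dd[OF FG(2)] show ?thesis
    by simp
qed

lemma dd_const [simp]: "dd v (\<lambda>y. c) x = 0"
  by (simp add: dd_def)

lemma dd_cmult:
  fixes f :: "'a::real_normed_vector \<Rightarrow> real"
  assumes "f differentiable (at x)"
  shows "dd v (\<lambda>y. c * f y) x = c * dd v f x"
  using dd_mult[OF differentiable_const assms] by simp

lemma dd_bounded_linear: "bounded_linear f \<Longrightarrow> dd v f x = f v"
  by (rule has_derivative_dd) (rule bounded_linear.has_derivative[OF _ has_derivative_ident])

lemma dd_sum:
  fixes f :: "'i \<Rightarrow> 'a::real_normed_vector \<Rightarrow> real"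
  assumes "finite I" "\<And>i. i \<in> I \<Longrightarrow> f i differentiable (at x)"
  shows "dd v (\<lambda>y. \<Sum>i\<in>I. f i y) x = (\<Sum>i\<in>I. dd v (f i) x)"
  using assms
proof (induction I rule: finite_induct)
  case (insert i I)
  then show ?case
    by (simp add: dd_add)
qed simp

lemma iter_dd_snoc: "iter_dd vs (dd v f) = iter_dd (vs @ [v]) f"
  by (induction vs) auto

lemma smooth_dd: "smooth f \<Longrightarrow> smooth (dd v f)"
  unfolding smooth_def iter_dd_snoc by blast

lemma smooth_differentiable: "smooth f \<Longrightarrow> f differentiable (at x)"
  unfolding smooth_def by (metis iter_dd.simps(1))

lemma iter_dd_add:
  assumes "smooth f" "smooth g"
  shows "iter_dd vs (\<lambda>x. f x + g x) = (\<lambda>x. iter_dd vs f x + iter_dd vs g x)"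
proof (induction vs)
  case (Cons v vs)
  with assms show ?case
    by (auto simp: dd_add smooth_def)
qed simp

lemma smooth_add: "smooth f \<Longrightarrow> smooth g \<Longrightarrow> smooth (\<lambda>x. f x + g x)"
  by (simp add: smooth_def iter_dd_add)

lemma iter_dd_cmult:
  assumes "smooth f"
  shows "iter_dd vs (\<lambda>x. c * f x) = (\<lambda>x. c * iter_dd vs f x)"
proof (induction vs)
  case (Cons v vs)
  with assms show ?case
    by (auto simp: dd_cmult smooth_def)
qed simp

lemma smooth_cmult: "smooth f \<Longrightarrow> smooth (\<lambda>x. c * f x)"
  by (simp add: smooth_def iter_dd_cmult)

lemma smooth_const: "smooth (\<lambda>x. c)"
  unfolding smooth_def
proof (intro allI)
  fix vs x
  have "iter_dd vs (\<lambda>x. c) = (\<lambda>x. if vs = [] then c else 0)"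
    by (induction vs) auto
  then show "iter_dd vs (\<lambda>x. c) differentiable (at x)"
    by (simp only:) (rule differentiable_const)
qed

(* Tracking the shape l * f' + g' avoids a general Leibniz rule for iterated derivatives. *)
lemma iter_dd_linear_mult:
  assumes l: "bounded_linear l" and "smooth f"
  shows "\<exists>f' g'. smooth f' \<and> smooth g' \<and> iter_dd vs (\<lambda>x. l x * f x) = (\<lambda>x. l x * f' x + g' x)"
proof (induction vs)
  case Nil
  show ?case
    by (intro exI[of _ f] exI[of _ "\<lambda>x. 0"]) (simp add: \<open>smooth f\<close> smooth_const)
next
  case (Cons v vs)
  then obtain f' g' where f'g': "smooth f'" "smooth g'"
    "iter_dd vs (\<lambda>x. l x * f x) = (\<lambda>x. l x * f' x + g' x)"
    by blast
  have l_diff: "l differentiable (at x)" for x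
    using l bounded_linear_imp_differentiable by blast
  have "iter_dd (v # vs) (\<lambda>x. l x * f x) = dd v (\<lambda>x. l x * f' x + g' x)"
    using f'g'(3) by simp
  also have "\<dots> = (\<lambda>x. l x * dd v f' x + (l v * f' x + dd v g' x))"
    using f'g'(1,2) l_diff smooth_differentiable[of f'] smooth_differentiable[of g']
    by (auto simp: dd_add dd_mult dd_bounded_linear[OF l] algebra_simps)
  finally have "iter_dd (v # vs) (\<lambda>x. l x * f x) = (\<lambda>x. l x * dd v f' x + (l v * f' x + dd v g' x))" .
  moreover have "smooth (dd v f')" "smooth (\<lambda>x. l v * f' x + dd v g' x)"
    using f'g'(1,2) by (auto intro: smooth_dd smooth_add smooth_cmult)
  ultimately show ?case
    by blast
qed

lemma smooth_linear_mult:
  assumes l: "bounded_linear l" and "smooth f"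
  shows "smooth (\<lambda>x. l x * f x)"
  unfolding smooth_def
proof (intro allI)
  fix vs x
  obtain f' g' where f'g': "smooth f'" "smooth g'"
    "iter_dd vs (\<lambda>x. l x * f x) = (\<lambda>x. l x * f' x + g' x)"
    using iter_dd_linear_mult[OF assms] by blast
  have "(\<lambda>x. l x * f' x + g' x) differentiable (at x)"
    by (intro differentiable_add differentiable_mult bounded_linear_imp_differentiable[OF l]
        smooth_differentiable f'g'(1,2))
  with f'g'(3) show "iter_dd vs (\<lambda>x. l x * f x) differentiable (at x)"
    by simp
qed


section \<open>Coordinates and monomials\<close>

lemma bounded_linear_qc: "bounded_linear (\<lambda>x. qc x i)"
  unfolding qc_def by (intro bounded_linear_compose[OF bounded_linear_vec_nth] bounded_linear_fst)

lemma bounded_linear_pc: "bounded_linear (\<lambda>x. pc x i)"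
  unfolding pc_def
  by (intro bounded_linear_compose[OF bounded_linear_vec_nth] bounded_linear_fst_comp
      bounded_linear_snd)

lemma bounded_linear_tc: "bounded_linear tc"
  using bounded_linear_snd_comp[OF bounded_linear_snd] by (simp add: tc_def[abs_def])

lemma coordinates_simps [simp]:
  "qc (x + y) i = qc x i + qc y i" "pc (x + y) i = pc x i + pc y i" "tc (x + y) = tc x + tc y"
  "qc (c *\<^sub>R x) i = c * qc x i" "pc (c *\<^sub>R x) i = c * pc x i" "tc (c *\<^sub>R x) = c * tc x"
  "qc (x - y) i = qc x i - qc y i" "pc (x - y) i = pc x i - pc y i" "tc (x - y) = tc x - tc y"
  "qc 0 i = 0" "pc 0 i = 0" "tc 0 = 0"
  "qc (eq j) i = (if i = j then 1 else 0)" "pc (eq j) i = 0" "tc (eq j) = 0"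
  "qc (ep j) i = 0" "pc (ep j) i = (if i = j then 1 else 0)" "tc (ep j) = 0"
  "qc et i = 0" "pc et i = 0" "tc et = 1"
  by (auto simp: qc_def pc_def tc_def eq_def ep_def et_def axis_def)

lemma differentiable_coordinates [simp]:
  "(\<lambda>y. qc y i) differentiable (at x)" "(\<lambda>y. pc y i) differentiable (at x)"
  "tc differentiable (at x)"
  by (simp_all add: bounded_linear_imp_differentiable bounded_linear_qc bounded_linear_pc
      bounded_linear_tc)

lemma dd_coordinates [simp]:
  "dd v (\<lambda>y. qc y i) x = qc v i" "dd v (\<lambda>y. pc y i) x = pc v i" "dd v tc x = tc v"
  by (simp_all add: dd_bounded_linear bounded_linear_qc bounded_linear_pc bounded_linear_tc)

lemma pt_eqI:
  assumes "\<And>i. qc u i = qc v i" "\<And>i. pc u i = pc v i" "tc u = tc v"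
  shows "u = v"
  using assms by (auto simp: qc_def pc_def tc_def prod_eq_iff vec_eq_iff)

lemma pt_coordinate_expansion:
  "v = (\<Sum>i\<in>UNIV. qc v i *\<^sub>R eq i) + (\<Sum>i\<in>UNIV. pc v i *\<^sub>R ep i) + tc v *\<^sub>R et"
proof -
  have [simp]: "qc (\<Sum>i\<in>I. f i) j = (\<Sum>i\<in>I. qc (f i) j)"
    "pc (\<Sum>i\<in>I. f i) j = (\<Sum>i\<in>I. pc (f i) j)" "tc (\<Sum>i\<in>I. f i) = (\<Sum>i\<in>I. tc (f i))"
    for I and f :: "_ \<Rightarrow> 'a::finite pt" and j
    by (simp_all add: qc_def pc_def tc_def fst_sum snd_sum)
  show ?thesis
    by (rule pt_eqI) (simp_all add: if_distrib[of "times _"] cong: if_cong)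
qed

lemma dd_coordinate_expansion:
  assumes "f differentiable (at x)"
  shows "dd v f x = (\<Sum>i\<in>UNIV. qc v i * dd (eq i) f x) + (\<Sum>i\<in>UNIV. pc v i * dd (ep i) f x)
    + tc v * dd et f x"
proof -
  note lin = linear_dd[OF assms]
  have "dd v f x = dd ((\<Sum>i\<in>UNIV. qc v i *\<^sub>R eq i) + (\<Sum>i\<in>UNIV. pc v i *\<^sub>R ep i) + tc v *\<^sub>R et) f x"
    by (rule arg_cong[where f = "\<lambda>w. dd w f x"]) (rule pt_coordinate_expansion)
  then show ?thesis
    by (simp add: linear_add[OF lin] linear_scale[OF lin] linear_sum[OF lin])
qed

lemma prod_power_fun_upd:
  assumes "finite I" "i \<in> I"
  shows "(\<Prod>j\<in>I. f j ^ (e(i := n)) j) = f i ^ n * (\<Prod>j\<in>I - {i}. f j ^ e j)"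
proof -
  have "(\<Prod>j\<in>I - {i}. f j ^ (e(i := n)) j) = (\<Prod>j\<in>I - {i}. f j ^ e j)"
    by (intro prod.cong) auto
  with assms show ?thesis
    by (simp add: prod.remove[of I i])
qed


lemma sum_fun_upd:
  fixes e :: "'i \<Rightarrow> 'a::comm_monoid_add"
  assumes "finite I" "i \<in> I"
  shows "sum (e(i := n)) I + e i = sum e I + n"
proof -
  have "sum (e(i := n)) (I - {i}) = sum e (I - {i})"
    by (intro sum.cong) auto
  with assms show ?thesis
    by (simp add: sum.remove[of I i] ac_simps)
qed


lemma has_real_derivative_prod_power_upd:
  fixes g :: "'i \<Rightarrow> real"
  assumes "finite I" "i \<in> I"
  shows "((\<lambda>h. \<Prod>j\<in>I. (g(i := g i + h)) j ^ e j) has_real_derivative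
           real (e i) * (\<Prod>j\<in>I. g j ^ (e(i := e i - 1)) j)) (at 0)"
proof -
  have "(\<Prod>j\<in>I - {i}. (g(i := g i + h)) j ^ e j) = (\<Prod>j\<in>I - {i}. g j ^ e j)" for h
    by (intro prod.cong) auto
  with assms have "(\<Prod>j\<in>I. (g(i := g i + h)) j ^ e j) = (g i + h) ^ e i * (\<Prod>j\<in>I - {i}. g j ^ e j)" for h
    by (simp add: prod.remove[of I i])
  then show ?thesis
    unfolding prod_power_fun_upd[OF assms] by (auto intro!: derivative_eq_intros)
qed


lemma finite_mdeg_eq: "finite {m :: ('n::finite \<Rightarrow> nat) \<times> ('n \<Rightarrow> nat) \<times> nat. mdeg m = k}"
proof -
  let ?A = "Pi\<^sub>E UNIV (\<lambda>_::'n. {..k})"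
  have "{m :: ('n \<Rightarrow> nat) \<times> ('n \<Rightarrow> nat) \<times> nat. mdeg m = k} \<subseteq> ?A \<times> ?A \<times> {..k}"
  proof
    fix m :: "('n \<Rightarrow> nat) \<times> ('n \<Rightarrow> nat) \<times> nat"
    assume "m \<in> {m. mdeg m = k}"
    then obtain a b c where m: "m = (a, b, c)" and "sum a UNIV \<le> k" "sum b UNIV \<le> k" "c \<le> k"
      by (cases m) (auto simp: mdeg_def)
    moreover have "a i \<le> sum a UNIV" "b i \<le> sum b UNIV" for i
      by (auto intro: member_le_sum)
    ultimately show "m \<in> ?A \<times> ?A \<times> {..k}"
      by (auto simp: PiE_UNIV_domain intro: order.trans)
  qed
  moreover have "finite (?A \<times> ?A \<times> {..k})"
    by (intro finite_cartesian_product finite_PiE) auto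
  ultimately show ?thesis
    by (rule finite_subset)
qed

lemma mono_differentiable: "mono m differentiable (at \<xi>)"
proof -
  have [intro]: "(\<lambda>x. \<Prod>i\<in>I. f i x) differentiable (at \<xi>)"
    if "finite I" "\<And>i. f i differentiable (at \<xi>)" for I and f :: "_ \<Rightarrow> _ \<Rightarrow> real"
    using that by (induction I rule: finite_induct) (auto intro!: differentiable_mult)
  show ?thesis
    by (cases m) (auto simp: mono_def[abs_def] intro!: differentiable_mult differentiable_power)
qed

lemma mono_scaleR: "mono m (c *\<^sub>R \<xi>) = c ^ mdeg m * mono m \<xi>"
  by (cases m) (simp add: mono_def mdeg_def power_mult_distrib prod.distrib power_sum power_add)

lemma mono_mdeg_0: "mdeg m = 0 \<Longrightarrow> mono m \<xi> = 1"
  by (cases m) (simp add: mono_def mdeg_def)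

lemma dd_mono_q: "dd (eq i) (mono (a, b, c)) \<xi> = real (a i) * mono (a(i := a i - 1), b, c) \<xi>"
proof -
  have q: "qc (\<xi> + h *\<^sub>R eq i) j = ((qc \<xi>)(i := qc \<xi> i + h)) j" for h j
    by simp
  have "((\<lambda>h. (\<Prod>j\<in>UNIV. ((qc \<xi>)(i := qc \<xi> i + h)) j ^ a j) * ((\<Prod>j\<in>UNIV. pc \<xi> j ^ b j) * tc \<xi> ^ c))
      has_real_derivative real (a i) * mono (a(i := a i - 1), b, c) \<xi>) (at 0)"
    unfolding mono_def case_prod_conv
    by (rule DERIV_cong, rule DERIV_cmult_right, rule has_real_derivative_prod_power_upd) simp_all
  then show ?thesis
    unfolding dd_def mono_def[of "(a, b, c)"] case_prod_conv q
    by (intro DERIV_imp_deriv) (simp add: mult.assoc)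
qed

lemma dd_mono_p: "dd (ep i) (mono (a, b, c)) \<xi> = real (b i) * mono (a, b(i := b i - 1), c) \<xi>"
proof -
  have p: "pc (\<xi> + h *\<^sub>R ep i) j = ((pc \<xi>)(i := pc \<xi> i + h)) j" for h j
    by simp
  have "((\<lambda>h. (\<Prod>j\<in>UNIV. ((pc \<xi>)(i := pc \<xi> i + h)) j ^ b j) * ((\<Prod>j\<in>UNIV. qc \<xi> j ^ a j) * tc \<xi> ^ c))
      has_real_derivative real (b i) * mono (a, b(i := b i - 1), c) \<xi>) (at 0)"
    unfolding mono_def case_prod_conv
    by (rule DERIV_cong, rule DERIV_cmult_right, rule has_real_derivative_prod_power_upd) simp_all
  then show ?thesis
    unfolding dd_def mono_def[of "(a, b, c)"] case_prod_conv p
    by (intro DERIV_imp_deriv) (simp add: algebra_simps)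
qed

lemma dd_mono_t: "dd et (mono (a, b, c)) \<xi> = real c * mono (a, b, c - 1) \<xi>"
  unfolding dd_def mono_def
  by (intro DERIV_imp_deriv) (auto intro!: derivative_eq_intros)

lemma mono_mult_q: "qc \<xi> i * mono (a, b, c) \<xi> = mono (a(i := Suc (a i)), b, c) \<xi>"
  by (simp add: mono_def prod_power_fun_upd prod.remove[of UNIV i])

lemma mono_mult_p: "pc \<xi> i * mono (a, b, c) \<xi> = mono (a, b(i := Suc (b i)), c) \<xi>"
  by (simp add: mono_def prod_power_fun_upd prod.remove[of UNIV i])

lemma mono_mult_t: "tc \<xi> * mono (a, b, c) \<xi> = mono (a, b, Suc c) \<xi>"
  by (simp add: mono_def)

lemma mdeg_lower_q: "a i \<noteq> 0 \<Longrightarrow> mdeg (a(i := a i - 1), b, c) = mdeg (a, b, c) - 1"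
  using sum_fun_upd[of UNIV i a "a i - 1"] by (simp add: mdeg_def)

lemma mdeg_lower_p: "b i \<noteq> 0 \<Longrightarrow> mdeg (a, b(i := b i - 1), c) = mdeg (a, b, c) - 1"
  using sum_fun_upd[of UNIV i b "b i - 1"] by (simp add: mdeg_def)

lemma mdeg_raise_q: "mdeg (a(i := Suc (a i)), b, c) = mdeg (a, b, c) + 1"
  using sum_fun_upd[of UNIV i a "Suc (a i)"] by (simp add: mdeg_def)

lemma mdeg_raise_p: "mdeg (a, b(i := Suc (b i)), c) = mdeg (a, b, c) + 1"
  using sum_fun_upd[of UNIV i b "Suc (b i)"] by (simp add: mdeg_def)


section \<open>The spaces \<open>R\<^sup>k\<close>\<close>

lemma inR_E:
  assumes "inR k S"
  obtains a where "\<And>m. smooth (a m)" "S = (\<lambda>x \<xi>. \<Sum>m\<in>{m. mdeg m = k}. a m x * mono m \<xi>)"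
  using assms unfolding inR_def by (auto simp: fun_eq_iff)

lemma inR_zero: "inR k (\<lambda>x \<xi>. 0)"
  unfolding inR_def by (intro exI[of _ "\<lambda>m x. 0"]) (simp add: smooth_const)

lemma inR_add:
  assumes "inR k S" "inR k T"
  shows "inR k (\<lambda>x \<xi>. S x \<xi> + T x \<xi>)"
proof -
  obtain a where "\<And>m. smooth (a m)" "S = (\<lambda>x \<xi>. \<Sum>m\<in>{m. mdeg m = k}. a m x * mono m \<xi>)"
    using inR_E[OF assms(1)] by blast
  moreover obtain b where "\<And>m. smooth (b m)" "T = (\<lambda>x \<xi>. \<Sum>m\<in>{m. mdeg m = k}. b m x * mono m \<xi>)"
    using inR_E[OF assms(2)] by blast
  ultimately show ?thesis
    unfolding inR_def by (intro exI[of _ "\<lambda>m x. a m x + b m x"])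
      (auto simp: smooth_add sum.distrib algebra_simps)
qed

lemma inR_cmult:
  assumes "inR k S"
  shows "inR k (\<lambda>x \<xi>. c * S x \<xi>)"
proof -
  obtain a where "\<And>m. smooth (a m)" "S = (\<lambda>x \<xi>. \<Sum>m\<in>{m. mdeg m = k}. a m x * mono m \<xi>)"
    using inR_E[OF assms] by blast
  then show ?thesis
    unfolding inR_def by (intro exI[of _ "\<lambda>m x. c * a m x"])
      (auto simp: smooth_cmult sum_distrib_left algebra_simps)
qed

lemma inR_diff: "inR k S \<Longrightarrow> inR k T \<Longrightarrow> inR k (\<lambda>x \<xi>. S x \<xi> - T x \<xi>)"
  using inR_add[of k S "\<lambda>x \<xi>. (- 1) * T x \<xi>"] inR_cmult[of k T "- 1"] by simp

lemma inR_sum: "finite I \<Longrightarrow> (\<And>i. i \<in> I \<Longrightarrow> inR k (F i)) \<Longrightarrow> inR k (\<lambda>x \<xi>. \<Sum>i\<in>I. F i x \<xi>)"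
  by (induction I rule: finite_induct) (auto intro!: inR_add inR_zero)

lemma inR_monomial:
  assumes "smooth a" "mdeg m = k"
  shows "inR k (\<lambda>x \<xi>. a x * mono m \<xi>)"
  unfolding inR_def
proof (intro exI[of _ "\<lambda>m' x. if m' = m then a x else 0"] conjI allI)
  show "smooth (\<lambda>x. if m' = m then a x else 0)" for m'
    using assms(1) smooth_const[of 0] by (cases "m' = m") auto
  fix x \<xi>
  have "(\<Sum>m'\<in>{m. mdeg m = k}. (if m' = m then a x else 0) * mono m' \<xi>)
      = (\<Sum>m'\<in>{m. mdeg m = k}. if m' = m then a x * mono m \<xi> else 0)"
    by (rule sum.cong) auto
  also have "\<dots> = a x * mono m \<xi>"
    using assms(2) finite_mdeg_eq[of k] by (subst sum.delta) auto
  finally show "a x * mono m \<xi> = (\<Sum>m'\<in>{m. mdeg m = k}. (if m' = m then a x else 0) * mono m' \<xi>)"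
    by (rule sym)
qed

lemma inR_differentiable_x: "inR k S \<Longrightarrow> (\<lambda>y. S y \<xi>) differentiable (at x)"
  by (elim inR_E) (simp add: finite_mdeg_eq smooth_differentiable)

lemma inR_differentiable_xi: "inR k S \<Longrightarrow> S x differentiable (at \<xi>)"
  by (elim inR_E) (simp add: finite_mdeg_eq mono_differentiable)

lemma pdx_coefficient_sum:
  assumes "finite M" "\<And>m. m \<in> M \<Longrightarrow> smooth (a m)"
  shows "pdx v (\<lambda>x \<xi>. \<Sum>m\<in>M. a m x * g m \<xi>) x \<xi> = (\<Sum>m\<in>M. dd v (a m) x * g m \<xi>)"
  unfolding pdx_def using assms by (simp add: dd_sum dd_mult smooth_differentiable)

lemma pdxi_coefficient_sum:
  assumes "finite M" "\<And>m \<xi>. m \<in> M \<Longrightarrow> g m differentiable (at \<xi>)"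
  shows "pdxi w (\<lambda>x \<xi>. \<Sum>m\<in>M. a m x * g m \<xi>) x \<xi> = (\<Sum>m\<in>M. a m x * dd w (g m) \<xi>)"
  unfolding pdxi_def using assms by (simp add: dd_sum dd_cmult)

lemma inR_pdx:
  assumes "inR k S"
  shows "inR k (pdx v S)"
proof -
  obtain a where "\<And>m. smooth (a m)" "S = (\<lambda>x \<xi>. \<Sum>m\<in>{m. mdeg m = k}. a m x * mono m \<xi>)"
    using inR_E[OF assms] by blast
  then show ?thesis
    unfolding inR_def by (intro exI[of _ "\<lambda>m. dd v (a m)"])
      (simp add: pdx_coefficient_sum finite_mdeg_eq smooth_dd)
qed

lemma inR_pdxi_lower:
  fixes S :: "'n::finite sym"
  assumes S: "inR k S"
    and dd_mono: "\<And>m \<xi>. dd w (mono m) \<xi> = real (e m) * mono (lower m) \<xi>"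
    and mdeg_lower: "\<And>m. e m \<noteq> 0 \<Longrightarrow> mdeg (lower m) = mdeg m - 1"
  shows "inR (k - 1) (pdxi w S)"
proof -
  obtain a where a: "\<And>m. smooth (a m)" "S = (\<lambda>x \<xi>. \<Sum>m\<in>{m. mdeg m = k}. a m x * mono m \<xi>)"
    using inR_E[OF S] by blast
  have "pdxi w S = (\<lambda>x \<xi>. \<Sum>m\<in>{m. mdeg m = k}. (real (e m) * a m x) * mono (lower m) \<xi>)"
    unfolding a(2) by (intro ext) (simp add: pdxi_coefficient_sum finite_mdeg_eq mono_differentiable dd_mono, simp add: ac_simps)
  moreover have "inR (k - 1) (\<lambda>x \<xi>. \<Sum>m\<in>{m. mdeg m = k}. (real (e m) * a m x) * mono (lower m) \<xi>)"
  proof (rule inR_sum[OF finite_mdeg_eq])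
    fix m :: "('n \<Rightarrow> nat) \<times> ('n \<Rightarrow> nat) \<times> nat"
    assume "m \<in> {m. mdeg m = k}"
    then show "inR (k - 1) (\<lambda>x \<xi>. (real (e m) * a m x) * mono (lower m) \<xi>)"
      using inR_zero mdeg_lower[of m]
      by (cases "e m = 0") (auto intro!: inR_monomial smooth_cmult a(1))
  qed
  ultimately show ?thesis
    by simp
qed

lemma inR_pdxi_q:
  fixes S :: "'n::finite sym"
  assumes "inR k S"
  shows "inR (k - 1) (pdxi (eq i) S)"
  using assms
proof (rule inR_pdxi_lower)
  show "dd (eq i) (mono m) \<xi> = real (fst m i) * mono ((fst m)(i := fst m i - 1), snd m) \<xi>" for m \<xi>
    by (cases m) (simp add: dd_mono_q)
  show "mdeg ((fst m)(i := fst m i - 1), snd m) = mdeg m - 1" if "fst m i \<noteq> 0" for m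
    using that mdeg_lower_q[of "fst m" i "fst (snd m)" "snd (snd m)"] by (cases m) simp
qed

lemma inR_pdxi_p:
  fixes S :: "'n::finite sym"
  assumes "inR k S"
  shows "inR (k - 1) (pdxi (ep i) S)"
  using assms
proof (rule inR_pdxi_lower)
  show "dd (ep i) (mono m) \<xi>
      = real (fst (snd m) i) * mono (fst m, (fst (snd m))(i := fst (snd m) i - 1), snd (snd m)) \<xi>" for m \<xi>
    by (cases m) (simp add: dd_mono_p)
  show "mdeg (fst m, (fst (snd m))(i := fst (snd m) i - 1), snd (snd m)) = mdeg m - 1"
    if "fst (snd m) i \<noteq> 0" for m
    using that mdeg_lower_p[of "fst (snd m)" i "fst m" "snd (snd m)"] by (cases m) simp
qed

lemma inR_pdxi_t:
  fixes S :: "'n::finite sym"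
  assumes "inR k S"
  shows "inR (k - 1) (pdxi et S)"
  using assms
proof (rule inR_pdxi_lower)
  show "dd et (mono m) \<xi> = real (snd (snd m)) * mono (fst m, fst (snd m), snd (snd m) - 1) \<xi>" for m \<xi>
    by (cases m) (simp add: dd_mono_t)
  show "mdeg (fst m, fst (snd m), snd (snd m) - 1) = mdeg m - 1" if "snd (snd m) \<noteq> 0" for m
    using that by (cases m) (simp add: mdeg_def)
qed

lemma pdxi_coordinate_expansion:
  "inR k S \<Longrightarrow> pdxi w S x \<xi> = (\<Sum>i\<in>UNIV. qc w i * pdxi (eq i) S x \<xi>)
     + (\<Sum>i\<in>UNIV. pc w i * pdxi (ep i) S x \<xi>) + tc w * pdxi et S x \<xi>"
  unfolding pdxi_def by (rule dd_coordinate_expansion[OF inR_differentiable_xi])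

lemma inR_pdxi:
  assumes "inR k S"
  shows "inR (k - 1) (pdxi w S)"
proof -
  have "pdxi w S = (\<lambda>x \<xi>. (\<Sum>i\<in>UNIV. qc w i * pdxi (eq i) S x \<xi>)
     + (\<Sum>i\<in>UNIV. pc w i * pdxi (ep i) S x \<xi>) + tc w * pdxi et S x \<xi>)"
    using pdxi_coordinate_expansion[OF assms] by blast
  then show ?thesis
    by (simp only:) (intro inR_add inR_sum inR_cmult inR_pdxi_q inR_pdxi_p inR_pdxi_t assms finite)
qed

lemma inR_mult_raise:
  assumes S: "inR k S"
    and mult_mono: "\<And>m \<xi>. g \<xi> * mono m \<xi> = mono (raise m) \<xi>"
    and mdeg_raise: "\<And>m. mdeg (raise m) = mdeg m + 1"
  shows "inR (k + 1) (\<lambda>x \<xi>. g \<xi> * S x \<xi>)"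
proof -
  obtain a where a: "\<And>m. smooth (a m)" "S = (\<lambda>x \<xi>. \<Sum>m\<in>{m. mdeg m = k}. a m x * mono m \<xi>)"
    using inR_E[OF S] by blast
  have "(\<lambda>x \<xi>. g \<xi> * S x \<xi>) = (\<lambda>x \<xi>. \<Sum>m\<in>{m. mdeg m = k}. a m x * mono (raise m) \<xi>)"
    unfolding a(2) by (simp add: sum_distrib_left mult.left_commute[of "g _"] mult_mono)
  moreover have "inR (k + 1) (\<lambda>x \<xi>. \<Sum>m\<in>{m. mdeg m = k}. a m x * mono (raise m) \<xi>)"
    by (rule inR_sum[OF finite_mdeg_eq]) (simp add: inR_monomial a(1) mdeg_raise)
  ultimately show ?thesis
    by simp
qed

lemma inR_mult_q:
  fixes S :: "'n::finite sym"
  assumes "inR k S"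
  shows "inR (k + 1) (\<lambda>x \<xi>. qc \<xi> i * S x \<xi>)"
  using assms
proof (rule inR_mult_raise)
  show "qc \<xi> i * mono m \<xi> = mono ((fst m)(i := Suc (fst m i)), snd m) \<xi>" for m \<xi>
    by (cases m) (simp add: mono_mult_q)
  show "mdeg ((fst m)(i := Suc (fst m i)), snd m) = mdeg m + 1" for m
    by (cases m) (simp add: mdeg_raise_q)
qed

lemma inR_mult_p:
  fixes S :: "'n::finite sym"
  assumes "inR k S"
  shows "inR (k + 1) (\<lambda>x \<xi>. pc \<xi> i * S x \<xi>)"
  using assms
proof (rule inR_mult_raise)
  show "pc \<xi> i * mono m \<xi> = mono (fst m, (fst (snd m))(i := Suc (fst (snd m) i)), snd (snd m)) \<xi>"
    for m \<xi>
    by (cases m) (simp add: mono_mult_p)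
  show "mdeg (fst m, (fst (snd m))(i := Suc (fst (snd m) i)), snd (snd m)) = mdeg m + 1" for m
    by (cases m) (simp add: mdeg_raise_p)
qed

lemma inR_mult_t:
  fixes S :: "'n::finite sym"
  assumes "inR k S"
  shows "inR (k + 1) (\<lambda>x \<xi>. tc \<xi> * S x \<xi>)"
  using assms
proof (rule inR_mult_raise)
  show "tc \<xi> * mono m \<xi> = mono (fst m, fst (snd m), Suc (snd (snd m))) \<xi>" for m \<xi>
    by (cases m) (simp add: mono_mult_t)
  show "mdeg (fst m, fst (snd m), Suc (snd (snd m))) = mdeg m + 1" for m
    by (cases m) (simp add: mdeg_def)
qed

lemma inR_linear_mult:
  assumes "bounded_linear l" "inR k S"
  shows "inR k (\<lambda>x \<xi>. l x * S x \<xi>)"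
proof -
  obtain a where "\<And>m. smooth (a m)" "S = (\<lambda>x \<xi>. \<Sum>m\<in>{m. mdeg m = k}. a m x * mono m \<xi>)"
    using inR_E[OF assms(2)] by blast
  with assms(1) show ?thesis
    unfolding inR_def by (intro exI[of _ "\<lambda>m x. l x * a m x"])
      (auto simp: sum_distrib_left algebra_simps intro: smooth_linear_mult)
qed

lemma pdxi_pdx_commute: "inR k S \<Longrightarrow> pdxi w (pdx v S) x \<xi> = pdx v (pdxi w S) x \<xi>"
proof (elim inR_E)
  fix a assume a: "\<And>m. smooth (a m)" "S = (\<lambda>x \<xi>. \<Sum>m\<in>{m. mdeg m = k}. a m x * mono m \<xi>)"
  have "pdx v S = (\<lambda>x \<xi>. \<Sum>m\<in>{m. mdeg m = k}. dd v (a m) x * mono m \<xi>)"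
    "pdxi w S = (\<lambda>x \<xi>. \<Sum>m\<in>{m. mdeg m = k}. a m x * dd w (mono m) \<xi>)"
    unfolding a(2)
    by (simp_all add: fun_eq_iff pdx_coefficient_sum pdxi_coefficient_sum finite_mdeg_eq a(1)
        mono_differentiable)
  then show ?thesis
    by (simp add: pdx_coefficient_sum pdxi_coefficient_sum finite_mdeg_eq a(1) mono_differentiable)
qed

lemma inR_homogeneous: "inR k S \<Longrightarrow> S x (c *\<^sub>R \<xi>) = c ^ k * S x \<xi>"
  by (elim inR_E) (simp add: mono_scaleR sum_distrib_left algebra_simps)

lemma euler_identity:
  assumes "inR k S"
  shows "pdxi \<xi> S x \<xi> = real k * S x \<xi>"
proof -
  have "S x (\<xi> + h *\<^sub>R \<xi>) = (1 + h) ^ k * S x \<xi>" for h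
    using inR_homogeneous[OF assms, of x "1 + h" \<xi>] by (simp add: algebra_simps)
  moreover have "((\<lambda>h. (1 + h) ^ k * S x \<xi>) has_real_derivative real k * S x \<xi>) (at 0)"
    by (auto intro!: derivative_eq_intros)
  ultimately show ?thesis
    unfolding pdxi_def dd_def by (simp add: DERIV_imp_deriv)
qed

lemma pdxi_inR_0: "inR 0 S \<Longrightarrow> pdxi w S x \<xi> = 0"
proof (elim inR_E)
  fix a assume a: "\<And>m. smooth (a m)" "S = (\<lambda>x \<xi>. \<Sum>m\<in>{m. mdeg m = 0}. a m x * mono m \<xi>)"
  have "dd w (mono m) \<xi> = 0" if "mdeg m = 0" for m
    by (simp add: dd_def mono_mdeg_0[OF that])
  then show ?thesis
    unfolding a(2) by (auto simp: pdxi_coefficient_sum finite_mdeg_eq mono_differentiable intro!: sum.neutral)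
qed


section \<open>The operators \<open>i(\<alpha>)\<close>, \<open>D\<close> and \<open>X\<close>\<close>

lemma inR_Es: "inR k S \<Longrightarrow> inR k (Es S)"
  unfolding Es_def[abs_def]
  by (intro inR_sum inR_add inR_linear_mult bounded_linear_pc bounded_linear_qc inR_pdx finite)

lemma inR_Dop:
  fixes S :: "'n::finite sym"
  assumes "inR k S"
  shows "inR (k + 1) (Dop S)"
proof -
  have "Dop S = (\<lambda>x \<xi>. (\<Sum>i\<in>UNIV. qc \<xi> i * pdx (ep i) S x \<xi> - pc \<xi> i * pdx (eq i) S x \<xi>)
      + tc \<xi> * Es S x \<xi>
      - (\<Sum>i\<in>UNIV. pc x i * (pc \<xi> i * pdx et S x \<xi>) + qc x i * (qc \<xi> i * pdx et S x \<xi>)))"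
    by (intro ext) (simp add: Dop_def Es_xi_def sum_distrib_left sum_distrib_right sum.distrib
        algebra_simps)
  then show ?thesis
    by (simp only:) (intro inR_add inR_diff inR_sum inR_mult_q inR_mult_p inR_mult_t
        inR_linear_mult bounded_linear_pc bounded_linear_qc inR_pdx inR_Es assms finite)
qed

lemma inR_Xop:
  fixes S :: "'n::finite sym"
  assumes "inR k S"
  shows "inR (k + 1) (Xop \<delta> K S)"
  unfolding Xop_def[abs_def] mult.assoc
  by (intro inR_add inR_cmult inR_Dop inR_mult_t assms)

lemma inR_ialpha:
  fixes S :: "'n::finite sym"
  assumes "inR k S"
  shows "inR (k - 1) (ialpha S)"
  unfolding ialpha_def[abs_def]
  by (intro inR_cmult inR_diff inR_sum inR_linear_mult bounded_linear_pc bounded_linear_qc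
      inR_pdxi_q inR_pdxi_p inR_pdxi_t assms finite)

lemma ialpha_inR_0: "inR 0 S \<Longrightarrow> ialpha S = (\<lambda>x \<xi>. 0)"
  by (simp add: fun_eq_iff ialpha_def pdxi_inR_0)

lemma Dop_zero: "Dop (\<lambda>x \<xi>. 0) = (\<lambda>x \<xi>. 0)"
  by (simp add: fun_eq_iff Dop_def Es_def pdx_def)

lemma pdx_add:
  "inR k1 S \<Longrightarrow> inR k2 T \<Longrightarrow> pdx v (\<lambda>x \<xi>. S x \<xi> + T x \<xi>) x \<xi> = pdx v S x \<xi> + pdx v T x \<xi>"
  by (simp add: pdx_def dd_add inR_differentiable_x)

lemma pdx_cmult: "inR k S \<Longrightarrow> pdx v (\<lambda>x \<xi>. c * S x \<xi>) x \<xi> = c * pdx v S x \<xi>"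
  by (simp add: pdx_def dd_cmult inR_differentiable_x)

lemma Xop_add:
  assumes "inR k1 S" "inR k2 T"
  shows "Xop \<delta> K (\<lambda>x \<xi>. S x \<xi> + T x \<xi>) = (\<lambda>x \<xi>. Xop \<delta> K S x \<xi> + Xop \<delta> K T x \<xi>)"
  by (intro ext) (simp add: Xop_def Dop_def Es_def pdx_add[OF assms] algebra_simps sum.distrib
      sum_distrib_left sum_subtractf)

lemma Xop_cmult:
  assumes "inR k S"
  shows "Xop \<delta> K (\<lambda>x \<xi>. c * S x \<xi>) = (\<lambda>x \<xi>. c * Xop \<delta> K S x \<xi>)"
  by (simp add: fun_eq_iff Xop_def Dop_def Es_def pdx_cmult[OF assms] sum_distrib_left
      algebra_simps)

lemma Xop_zero: "Xop \<delta> K (\<lambda>x \<xi>. 0) = (\<lambda>x \<xi>. 0)"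
  by (simp add: fun_eq_iff Xop_def Dop_zero[unfolded fun_eq_iff])

(* The coefficient vectors of i(alpha) (in xi) and of D (in x); see ialpha_eq_pdxi and Dop_eq_pdx. *)
definition alpha_field_linear :: "'n::finite pt \<Rightarrow> 'n pt" where
  "alpha_field_linear v = ((1/2) *\<^sub>R fst (snd v), - (1/2) *\<^sub>R fst v, 0)"

definition alpha_field :: "'n::finite pt \<Rightarrow> 'n pt" where
  "alpha_field x = alpha_field_linear x - (1/2) *\<^sub>R et"

definition D_field :: "'n::finite pt \<Rightarrow> 'n pt \<Rightarrow> 'n pt" where
  "D_field x \<xi> = (tc \<xi> *\<^sub>R fst x - fst (snd \<xi>), fst \<xi> + tc \<xi> *\<^sub>R fst (snd x), - Es_xi x \<xi>)"

lemma field_coordinates [simp]: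
  "qc (alpha_field_linear v) i = pc v i / 2" "pc (alpha_field_linear v) i = - qc v i / 2"
  "tc (alpha_field_linear v) = 0"
  "qc (alpha_field x) i = pc x i / 2" "pc (alpha_field x) i = - qc x i / 2" "tc (alpha_field x) = - 1/2"
  "qc (D_field x \<xi>) i = tc \<xi> * qc x i - pc \<xi> i" "pc (D_field x \<xi>) i = qc \<xi> i + tc \<xi> * pc x i"
  "tc (D_field x \<xi>) = - Es_xi x \<xi>"
  by (simp_all add: alpha_field_linear_def alpha_field_def D_field_def qc_def pc_def tc_def et_def)

lemma ialpha_eq_pdxi:
  assumes "inR k S"
  shows "ialpha S x \<xi> = pdxi (alpha_field x) S x \<xi>"
  unfolding ialpha_def pdxi_def
    dd_coordinate_expansion[OF inR_differentiable_xi[OF assms], of "alpha_field x"]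
  by (simp add: sum_subtractf sum_divide_distrib sum_negf algebra_simps)

lemma Dop_eq_pdx:
  assumes "inR k S"
  shows "Dop S x \<xi> = pdx (D_field x \<xi>) S x \<xi>"
  unfolding Dop_def Es_def pdx_def
    dd_coordinate_expansion[OF inR_differentiable_x[OF assms], of "D_field x \<xi>"]
  by (simp add: sum_subtractf sum.distrib sum_distrib_left algebra_simps)

lemma ialpha_lincomb:
  assumes "finite L" "\<And>l. l \<in> L \<Longrightarrow> inR k (F l)"
  shows "ialpha (\<lambda>x \<xi>. \<Sum>l\<in>L. c l * F l x \<xi>) x \<xi> = (\<Sum>l\<in>L. c l * ialpha (F l) x \<xi>)"
proof -
  have "inR k (\<lambda>x \<xi>. \<Sum>l\<in>L. c l * F l x \<xi>)"
    using assms by (intro inR_sum inR_cmult)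
  then have "ialpha (\<lambda>x \<xi>. \<Sum>l\<in>L. c l * F l x \<xi>) x \<xi> = dd (alpha_field x) (\<lambda>\<eta>. \<Sum>l\<in>L. c l * F l x \<eta>) \<xi>"
    by (simp add: ialpha_eq_pdxi pdxi_def)
  also have "\<dots> = (\<Sum>l\<in>L. c l * dd (alpha_field x) (F l x) \<xi>)"
    using assms by (subst dd_sum) (auto simp: inR_differentiable_xi[OF assms(2)] dd_cmult)
  also have "\<dots> = (\<Sum>l\<in>L. c l * ialpha (F l) x \<xi>)"
    by (intro sum.cong refl) (simp add: ialpha_eq_pdxi[OF assms(2)] pdxi_def)
  finally show ?thesis .
qed

lemma ialpha_add:
  assumes "inR k S" "inR k T"
  shows "ialpha (\<lambda>x \<xi>. S x \<xi> + T x \<xi>) = (\<lambda>x \<xi>. ialpha S x \<xi> + ialpha T x \<xi>)"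
  using assms inR_add[OF assms]
  by (simp add: fun_eq_iff ialpha_eq_pdxi pdxi_def dd_add inR_differentiable_xi)


section \<open>The commutation relation\<close>

lemma has_derivative_alpha_field: "(alpha_field has_derivative alpha_field_linear) (at x)"
  unfolding alpha_field_def[abs_def] alpha_field_linear_def[abs_def]
  by (auto intro!: derivative_eq_intros)

lemma has_derivative_D_field: "(D_field x has_derivative D_field x) (at \<xi>)"
proof -
  have coordinates: "((\<lambda>y. qc y i) has_derivative (\<lambda>h. qc h i)) (at \<xi>)"
    "((\<lambda>y. pc y i) has_derivative (\<lambda>h. pc h i)) (at \<xi>)" "(tc has_derivative tc) (at \<xi>)" for i
    by (simp_all add: bounded_linear_imp_has_derivative bounded_linear_qc bounded_linear_pc
        bounded_linear_tc)
  show ?thesis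
    unfolding D_field_def[abs_def] Es_xi_def
    by (auto intro!: derivative_eq_intros coordinates)
qed

lemma D_field_alpha_field: "D_field x (alpha_field x) = 0"
  by (rule pt_eqI) (simp_all add: Es_xi_def algebra_simps)

lemma alpha_field_linear_D_field:
  "alpha_field_linear (D_field x \<xi>) = (1/2) *\<^sub>R \<xi> + tc \<xi> *\<^sub>R alpha_field x"
  by (rule pt_eqI) (simp_all add: field_simps)

lemma pdxi_pdx_field:
  fixes S :: "'n::finite sym"
  assumes S: "inR k S" and B: "(B x has_derivative B') (at \<xi>)"
  shows "pdxi w (\<lambda>y \<eta>. pdx (B y \<eta>) S y \<eta>) x \<xi> = pdx (B' w) S x \<xi> + pdx (B x \<xi>) (pdxi w S) x \<xi>"
proof -
  have coefficient: "((\<lambda>\<eta>. B x \<eta> \<bullet> b) has_derivative (\<lambda>u. B' u \<bullet> b)) (at \<xi>)" for b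
    using bounded_linear.has_derivative[OF bounded_linear_inner_left B] .
  have expand: "pdx v T x \<eta> = (\<Sum>b\<in>Basis. (v \<bullet> b) * pdx b T x \<eta>)" if "inR j T" for j T v \<eta>
    unfolding pdx_def by (rule dd_Basis_expansion[OF inR_differentiable_x[OF that]])
  have "(\<lambda>\<eta>. pdx (B x \<eta>) S x \<eta>) = (\<lambda>\<eta>. \<Sum>b\<in>Basis. (B x \<eta> \<bullet> b) * pdx b S x \<eta>)"
    by (intro ext expand[OF S])
  then have "pdxi w (\<lambda>y \<eta>. pdx (B y \<eta>) S y \<eta>) x \<xi> = dd w (\<lambda>\<eta>. \<Sum>b\<in>Basis. (B x \<eta> \<bullet> b) * pdx b S x \<eta>) \<xi>"
    by (simp add: pdxi_def)
  also have "\<dots> = (\<Sum>b\<in>Basis. (B' w \<bullet> b) * pdx b S x \<xi> + (B x \<xi> \<bullet> b) * pdxi w (pdx b S) x \<xi>)"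
    by (simp add: dd_sum dd_mult differentiableI[OF coefficient] has_derivative_dd[OF coefficient]
        inR_differentiable_xi[OF inR_pdx[OF S]] pdxi_def)
  also have "\<dots> = pdx (B' w) S x \<xi> + pdx (B x \<xi>) (pdxi w S) x \<xi>"
    by (simp add: expand[OF S, of "B' w"] expand[OF inR_pdxi[OF S], of "B x \<xi>"] sum.distrib
        pdxi_pdx_commute[OF S])
  finally show ?thesis .
qed

lemma pdx_pdxi_field:
  fixes S :: "'n::finite sym"
  assumes S: "inR k S" and A: "(A has_derivative A') (at x)"
  shows "pdx v (\<lambda>y \<eta>. pdxi (A y) S y \<eta>) x \<xi> = pdxi (A' v) S x \<xi> + pdxi (A x) (pdx v S) x \<xi>"
proof -
  have coefficient: "((\<lambda>y. A y \<bullet> b) has_derivative (\<lambda>u. A' u \<bullet> b)) (at x)" for b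
    using bounded_linear.has_derivative[OF bounded_linear_inner_left A] .
  have expand: "pdxi w T y \<xi> = (\<Sum>b\<in>Basis. (w \<bullet> b) * pdxi b T y \<xi>)" if "inR j T" for j T w y
    unfolding pdxi_def by (rule dd_Basis_expansion[OF inR_differentiable_xi[OF that]])
  have "(\<lambda>y. pdxi (A y) S y \<xi>) = (\<lambda>y. \<Sum>b\<in>Basis. (A y \<bullet> b) * pdxi b S y \<xi>)"
    by (intro ext expand[OF S])
  then have "pdx v (\<lambda>y \<eta>. pdxi (A y) S y \<eta>) x \<xi> = dd v (\<lambda>y. \<Sum>b\<in>Basis. (A y \<bullet> b) * pdxi b S y \<xi>) x"
    by (simp add: pdx_def)
  also have "\<dots> = (\<Sum>b\<in>Basis. (A' v \<bullet> b) * pdxi b S x \<xi> + (A x \<bullet> b) * pdx v (pdxi b S) x \<xi>)"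
    by (simp add: dd_sum dd_mult differentiableI[OF coefficient] has_derivative_dd[OF coefficient]
        inR_differentiable_x[OF inR_pdxi[OF S]] pdx_def)
  also have "\<dots> = pdxi (A' v) S x \<xi> + pdxi (A x) (pdx v S) x \<xi>"
    by (simp add: expand[OF S, of "A' v"] expand[OF inR_pdx[OF S], of "A x"] sum.distrib
        pdxi_pdx_commute[OF S, symmetric])
  finally show ?thesis .
qed

(* i(alpha) and D are derivations in xi and in x along alpha_field and D_field, so their commutator is
   the Lie bracket of the two fields: D_field vanishes along alpha_field, and the derivative of
   alpha_field along D_field x xi is (1/2) xi + tc xi * alpha_field x, which acts through the Euler
   identity. *)
lemma ialpha_Dop_commute:
  fixes S :: "'n::finite sym"
  assumes S: "inR k S"
  shows "ialpha (Dop S) x \<xi> = Dop (ialpha S) x \<xi> - tc \<xi> * ialpha S x \<xi> - real k / 2 * S x \<xi>"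
proof -
  have Dop_S: "Dop S = (\<lambda>y \<eta>. pdx (D_field y \<eta>) S y \<eta>)"
    by (intro ext Dop_eq_pdx[OF S])
  have ialpha_S: "ialpha S = (\<lambda>y \<eta>. pdxi (alpha_field y) S y \<eta>)"
    by (intro ext ialpha_eq_pdxi[OF S])
  have "ialpha (Dop S) x \<xi> = pdxi (alpha_field x) (\<lambda>y \<eta>. pdx (D_field y \<eta>) S y \<eta>) x \<xi>"
    using ialpha_eq_pdxi[OF inR_Dop[OF S]] by (simp add: Dop_S)
  also have "\<dots> = pdx (D_field x (alpha_field x)) S x \<xi> + pdx (D_field x \<xi>) (pdxi (alpha_field x) S) x \<xi>"
    by (rule pdxi_pdx_field[OF S has_derivative_D_field])
  also have "\<dots> = pdxi (alpha_field x) (pdx (D_field x \<xi>) S) x \<xi>"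
    by (simp add: D_field_alpha_field pdx_def pdxi_pdx_commute[OF S])
  also have "\<dots> = Dop (ialpha S) x \<xi> - pdxi (alpha_field_linear (D_field x \<xi>)) S x \<xi>"
  proof -
    have "Dop (ialpha S) x \<xi> = pdx (D_field x \<xi>) (\<lambda>y \<eta>. pdxi (alpha_field y) S y \<eta>) x \<xi>"
      using Dop_eq_pdx[OF inR_ialpha[OF S]] by (simp add: ialpha_S)
    also have "\<dots> = pdxi (alpha_field_linear (D_field x \<xi>)) S x \<xi> + pdxi (alpha_field x) (pdx (D_field x \<xi>) S) x \<xi>"
      by (rule pdx_pdxi_field[OF S has_derivative_alpha_field])
    finally show ?thesis
      by simp
  qed
  also have "pdxi (alpha_field_linear (D_field x \<xi>)) S x \<xi> = real k / 2 * S x \<xi> + tc \<xi> * ialpha S x \<xi>"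
  proof -
    note lin = linear_dd[OF inR_differentiable_xi[OF S, of x \<xi>]]
    show ?thesis
      by (simp add: alpha_field_linear_D_field pdxi_def linear_add[OF lin] linear_scale[OF lin]
          ialpha_S euler_identity[OF S, unfolded pdxi_def])
  qed
  finally show ?thesis
    by simp
qed

lemma ialpha_tc_mult:
  fixes S :: "'n::finite sym"
  assumes S: "inR k S"
  shows "ialpha (\<lambda>x \<xi>. tc \<xi> * S x \<xi>) x \<xi> = tc \<xi> * ialpha S x \<xi> - S x \<xi> / 2"
  by (simp add: ialpha_eq_pdxi[OF inR_mult_t[OF S]] ialpha_eq_pdxi[OF S] pdxi_def dd_mult
      inR_differentiable_xi[OF S])

lemma ialpha_Xop:
  fixes S :: "'n::finite sym"
  assumes S: "inR k S"
  shows "ialpha (Xop \<delta> k S)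
    = (\<lambda>x \<xi>. Xop \<delta> (k - 1) (ialpha S) x \<xi> - ((real CARD('n) + 1) * \<delta> + real k) * S x \<xi>)"
proof (intro ext)
  fix x \<xi>
  let ?c = "\<lambda>k. 2 * (real CARD('n) + 1) * \<delta> + real k"
  have "ialpha (Xop \<delta> k S) x \<xi> = dd (alpha_field x) (\<lambda>\<eta>. Dop S x \<eta> + ?c k * (tc \<eta> * S x \<eta>)) \<xi>"
    by (simp add: ialpha_eq_pdxi[OF inR_Xop[OF S]] pdxi_def Xop_def mult.assoc)
  also have "\<dots> = dd (alpha_field x) (Dop S x) \<xi> + ?c k * dd (alpha_field x) (\<lambda>\<eta>. tc \<eta> * S x \<eta>) \<xi>"
    by (simp add: dd_add dd_cmult inR_differentiable_xi[OF inR_Dop[OF S]]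
        inR_differentiable_xi[OF inR_mult_t[OF S]])
  also have "\<dots> = ialpha (Dop S) x \<xi> + ?c k * ialpha (\<lambda>x \<xi>. tc \<xi> * S x \<xi>) x \<xi>"
    by (simp add: ialpha_eq_pdxi[OF inR_Dop[OF S]] ialpha_eq_pdxi[OF inR_mult_t[OF S]] pdxi_def)
  also have "\<dots> = Dop (ialpha S) x \<xi> + (?c k - 1) * tc \<xi> * ialpha S x \<xi>
      - ((real CARD('n) + 1) * \<delta> + real k) * S x \<xi>"
    by (simp add: ialpha_Dop_commute[OF S] ialpha_tc_mult[OF S] algebra_simps)
  also have "\<dots> = Xop \<delta> (k - 1) (ialpha S) x \<xi> - ((real CARD('n) + 1) * \<delta> + real k) * S x \<xi>"
  proof (cases k)
    case 0
    then have "ialpha S = (\<lambda>x \<xi>. 0)"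
      using S by (simp add: ialpha_inR_0)
    with 0 show ?thesis
      by (simp add: Xop_def Dop_zero)
  next
    case (Suc j)
    then show ?thesis
      by (simp add: Xop_def algebra_simps)
  qed
  finally show "ialpha (Xop \<delta> k S) x \<xi>
      = Xop \<delta> (k - 1) (ialpha S) x \<xi> - ((real CARD('n) + 1) * \<delta> + real k) * S x \<xi>" .
qed

lemma inR_Xpow: "inR d T \<Longrightarrow> inR (d + l) (Xpow \<delta> m l T)"
  by (induction l) (simp_all add: inR_Xop[where k = "d + _", simplified])

lemma Xpow_add:
  assumes "inR d S" "inR d T"
  shows "Xpow \<delta> m l (\<lambda>x \<xi>. S x \<xi> + T x \<xi>) = (\<lambda>x \<xi>. Xpow \<delta> m l S x \<xi> + Xpow \<delta> m l T x \<xi>)"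
  by (induction l) (simp_all add: Xop_add[OF inR_Xpow[OF assms(1)] inR_Xpow[OF assms(2)]])

lemma Xpow_zero: "Xpow \<delta> m l (\<lambda>x \<xi>. 0) = (\<lambda>x \<xi>. 0)"
  by (induction l) (simp_all add: Xop_zero)

lemma rr_0: "rr n \<delta> 0 k = 0"
  by (simp add: rr_def)

lemma rr_Suc: "rr n \<delta> (real (Suc l)) k = rr n \<delta> (real l) k - ((real n + 1) * \<delta> + k + real l)"
  by (simp add: rr_def field_simps)

lemma ialpha_Xpow:
  fixes T :: "'n::finite sym"
  assumes T: "inR \<mu> T"
  shows "ialpha (Xpow \<delta> \<mu> l T) = (\<lambda>x \<xi>. Xpow \<delta> (\<mu> - 1) l (ialpha T) x \<xi>
            + rr CARD('n) \<delta> (real l) (real \<mu>) * Xpow \<delta> \<mu> (l - 1) T x \<xi>)"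
proof (induction l)
  case 0
  show ?case
    by (simp add: rr_0)
next
  case (Suc l)
  let ?r = "rr CARD('n) \<delta> (real l) (real \<mu>)"
  let ?c = "(real CARD('n) + 1) * \<delta> + real (\<mu> + l)"
  define V where "V = Xpow \<delta> \<mu> l T"
  have V: "inR (\<mu> + l) V"
    unfolding V_def by (rule inR_Xpow[OF T])
  have Xop_shift: "Xop \<delta> (\<mu> + l - 1) (Xpow \<delta> (\<mu> - 1) l (ialpha T)) = Xpow \<delta> (\<mu> - 1) (Suc l) (ialpha T)"
  proof (cases \<mu>)
    case 0
    then have "ialpha T = (\<lambda>x \<xi>. 0)"
      using T by (simp add: ialpha_inR_0)
    then show ?thesis
      by (simp add: Xpow_zero Xop_zero)
  qed simp
  have r_term: "?r * Xop \<delta> (\<mu> + l - 1) (Xpow \<delta> \<mu> (l - 1) T) x \<xi> = ?r * V x \<xi>" for x \<xi>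
    by (cases l) (simp_all add: rr_0 V_def)
  have "ialpha (Xpow \<delta> \<mu> (Suc l) T) = (\<lambda>x \<xi>. Xop \<delta> (\<mu> + l - 1) (ialpha V) x \<xi> - ?c * V x \<xi>)"
    by (simp add: V_def[symmetric] ialpha_Xop[OF V])
  also have "\<dots> = (\<lambda>x \<xi>. Xpow \<delta> (\<mu> - 1) (Suc l) (ialpha T) x \<xi> + ?r * V x \<xi> - ?c * V x \<xi>)"
    by (simp only: Suc.IH[folded V_def] Xop_add[OF inR_Xpow[OF inR_ialpha[OF T]] inR_cmult[OF inR_Xpow[OF T]]]
        Xop_cmult[OF inR_Xpow[OF T]] Xop_shift r_term)
  also have "\<dots> = (\<lambda>x \<xi>. Xpow \<delta> (\<mu> - 1) (Suc l) (ialpha T) x \<xi>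
      + rr CARD('n) \<delta> (real (Suc l)) (real \<mu>) * Xpow \<delta> \<mu> (Suc l - 1) T x \<xi>)"
    unfolding rr_Suc by (simp add: V_def algebra_simps)
  finally show ?case .
qed


section \<open>The right inverse \<open>s\<close> of \<open>i(\<alpha>)\<close>\<close>

lemma inR_ialpha_pow: "inR d S \<Longrightarrow> inR (d - l) ((ialpha ^^ l) S)"
proof (induction l)
  case (Suc l)
  then have "inR (d - l - 1) (ialpha ((ialpha ^^ l) S))"
    by (intro inR_ialpha)
  then show ?case
    by simp
qed simp

lemma ialpha_pow_add:
  assumes "inR d S" "inR d T"
  shows "(ialpha ^^ l) (\<lambda>x \<xi>. S x \<xi> + T x \<xi>) = (\<lambda>x \<xi>. (ialpha ^^ l) S x \<xi> + (ialpha ^^ l) T x \<xi>)"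
  by (induction l) (simp_all add: ialpha_add[OF inR_ialpha_pow[OF assms(1)] inR_ialpha_pow[OF assms(2)]])

lemma inR_smap:
  fixes S :: "'n::finite sym"
  assumes "inR m S"
  shows "inR (m + 1) (smap \<delta> m S)"
proof -
  have "inR (m + 1) (Xpow \<delta> (m + 1 - l) l ((ialpha ^^ (l - 1)) S))" if "l \<in> {1..m + 1}" for l
    using inR_Xpow[OF inR_ialpha_pow[OF assms, of "l - 1"], where l = l] that by simp
  then show ?thesis
    unfolding smap_def[abs_def]
    by (intro inR_cmult[where c = "- 1", simplified] inR_sum inR_cmult) auto
qed

lemma smap_add:
  fixes S T :: "'n::finite sym"
  assumes "inR m S" "inR m T"
  shows "smap \<delta> m (\<lambda>x \<xi>. S x \<xi> + T x \<xi>) = (\<lambda>x \<xi>. smap \<delta> m S x \<xi> + smap \<delta> m T x \<xi>)"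
  by (simp add: fun_eq_iff smap_def ialpha_pow_add[OF assms]
      Xpow_add[OF inR_ialpha_pow[OF assms(1)] inR_ialpha_pow[OF assms(2)]] sum.distrib
      algebra_simps)

lemma bb_recurrence:
  assumes "l \<ge> 1" "rr n \<delta> (real l) (real j - real l) \<noteq> 0"
  shows "bb n \<delta> j l * rr n \<delta> (real l) (real j - real l) = - bb n \<delta> j (l - 1)"
proof -
  obtain l' where l: "l = Suc l'"
    using assms(1) by (cases l) auto
  have "(\<Prod>m\<in>{1..Suc l'}. - rr n \<delta> (real m) (real j - real m))
      = (\<Prod>m\<in>{1..l'}. - rr n \<delta> (real m) (real j - real m)) * - rr n \<delta> (real l) (real j - real l)"
    by (simp add: l)
  with assms(2) show ?thesis
    unfolding bb_def l by (simp add: field_simps)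
qed

lemma ialpha_smap:
  fixes S :: "'n::finite sym"
  assumes S: "inR m S"
    and nonzero: "\<And>l. l \<in> {1..m + 1} \<Longrightarrow> rr CARD('n) \<delta> (real l) (real (m + 1) - real l) \<noteq> 0"
  shows "ialpha (smap \<delta> m S) = S"
proof (intro ext)
  fix x \<xi>
  let ?b = "bb CARD('n) \<delta> (m + 1)"
  let ?F = "\<lambda>l. Xpow \<delta> (m + 1 - l) l ((ialpha ^^ (l - 1)) S)"
  define g where "g l = - ?b l * Xpow \<delta> (m - l) l ((ialpha ^^ l) S) x \<xi>" for l
  have F: "inR (m + 1) (?F l)" if "l \<in> {1..m + 1}" for l
    using inR_Xpow[OF inR_ialpha_pow[OF S, of "l - 1"], where l = l] that by simp
  have "smap \<delta> m S = (\<lambda>x \<xi>. \<Sum>l\<in>{1..m + 1}. - ?b l * ?F l x \<xi>)"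
    by (simp add: fun_eq_iff smap_def sum_negf)
  then have "ialpha (smap \<delta> m S) x \<xi> = ialpha (\<lambda>x \<xi>. \<Sum>l\<in>{1..m + 1}. - ?b l * ?F l x \<xi>) x \<xi>"
    by (simp only:)
  also have "\<dots> = (\<Sum>l\<in>{1..m + 1}. - ?b l * ialpha (?F l) x \<xi>)"
    using F by (intro ialpha_lincomb) auto
  also have "\<dots> = (\<Sum>l\<in>{1..m + 1}. g l - g (l - 1))"
  proof (intro sum.cong refl)
    fix l assume l: "l \<in> {1..m + 1}"
    then obtain j where j: "l = Suc j" "j \<le> m"
      by (cases l) auto
    let ?r = "rr CARD('n) \<delta> (real l) (real (m + 1) - real l)"
    let ?X = "\<lambda>i. Xpow \<delta> (m - i) i ((ialpha ^^ i) S) x \<xi>"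
    have "ialpha (?F l) x \<xi> = ?X l + ?r * ?X (l - 1)"
      using ialpha_Xpow[OF inR_ialpha_pow[OF S, of j], of \<delta> l] j by simp
    then have "- ?b l * ialpha (?F l) x \<xi> = - (?b l * ?X l) - (?b l * ?r) * ?X (l - 1)"
      by (simp add: algebra_simps)
    also have "?b l * ?r = - ?b (l - 1)"
      using l nonzero[of l] by (intro bb_recurrence) auto
    finally show "- ?b l * ialpha (?F l) x \<xi> = g l - g (l - 1)"
      unfolding g_def by simp
  qed
  also have "\<dots> = g (m + 1) - g 0"
    using sum_telescope''[of 0 "m + 1" g] by simp
  also have "g (m + 1) = 0"
    using inR_ialpha_pow[OF S, of m] by (simp add: g_def ialpha_inR_0 Xpow_zero)
  finally show "ialpha (smap \<delta> m S) x \<xi> = S x \<xi>"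
    by (simp add: g_def bb_def)
qed

lemma rr_nonzero:
  assumes "\<forall>j\<in>{1..K}. \<forall>p\<in>{j-1..2*j-2}. \<delta> \<noteq> - real p / (2 * (real n + 1))"
    and "j \<in> {1..K}" "l \<in> {1..j}"
  shows "rr n \<delta> (real l) (real j - real l) \<noteq> 0"
proof
  assume "rr n \<delta> (real l) (real j - real l) = 0"
  with assms(3) have "2 * (real n + 1) * \<delta> + 2 * (real j - real l) + real l - 1 = 0"
    by (simp add: rr_def)
  moreover have "real (2 * j - l - 1) = 2 * real j - real l - 1"
    using assms(3) by auto
  ultimately have "\<delta> = - real (2 * j - l - 1) / (2 * (real n + 1))"
    by (simp add: field_simps)
  moreover have "2 * j - l - 1 \<in> {j-1..2*j-2}"
    using assms(3) by auto
  ultimately show False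
    using assms(1,2) by blast
qed


section \<open>Splitting along a graded right inverse\<close>

lemma ball_atLeast0_atMost_Suc: "(\<forall>l\<in>{0..Suc k}. P l) \<longleftrightarrow> P 0 \<and> (\<forall>l\<in>{0..k}. P (Suc l))"
  unfolding atLeast0_atMost_Suc_eq_insert_0 by blast

locale graded_right_inverse =
  fixes R :: "nat \<Rightarrow> 'a::ab_group_add \<Rightarrow> bool"
    and i :: "'a \<Rightarrow> 'a"
    and s :: "nat \<Rightarrow> 'a \<Rightarrow> 'a"
    and sp :: "nat \<Rightarrow> nat \<Rightarrow> 'a \<Rightarrow> 'a"
    and K :: nat
  assumes R_zero: "R k 0"
    and R_diff: "R k a \<Longrightarrow> R k b \<Longrightarrow> R k (a - b)"
    and i_R: "R (Suc k) a \<Longrightarrow> R k (i a)"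
    and i_R_0: "R 0 a \<Longrightarrow> i a = 0"
    and i_add: "R k a \<Longrightarrow> R k b \<Longrightarrow> i (a + b) = i a + i b"
    and s_R: "R k a \<Longrightarrow> R (Suc k) (s k a)"
    and s_add: "R k a \<Longrightarrow> R k b \<Longrightarrow> s k (a + b) = s k a + s k b"
    and i_s: "k < K \<Longrightarrow> R k a \<Longrightarrow> i (s k a) = a"
    and sp_0: "sp k 0 = id"
    and sp_Suc: "sp k (Suc l) = s (k - 1) \<circ> sp (k - 1) l"
begin

definition summand :: "nat \<Rightarrow> nat \<Rightarrow> 'a set" where
  "summand k l = sp k l ` {a. R (k - l) a \<and> i a = 0}"

lemma R_add: "R k a \<Longrightarrow> R k b \<Longrightarrow> R k (a + b)"
  using R_diff[of k a "0 - b"] R_diff[OF R_zero, of k b] by simp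

lemma R_sum: "finite L \<Longrightarrow> (\<And>l. l \<in> L \<Longrightarrow> R k (f l)) \<Longrightarrow> R k (\<Sum>l\<in>L. f l)"
  by (induction L rule: finite_induct) (auto intro: R_zero R_add)

lemma i_zero: "i 0 = 0"
  using i_add[OF R_zero R_zero] by simp

lemma s_zero: "s k 0 = 0"
  using s_add[OF R_zero R_zero, of k] by simp

lemma i_sum: "finite L \<Longrightarrow> (\<And>l. l \<in> L \<Longrightarrow> R k (f l)) \<Longrightarrow> i (\<Sum>l\<in>L. f l) = (\<Sum>l\<in>L. i (f l))"
proof (induction L rule: finite_induct)
  case empty
  show ?case
    by (simp add: i_zero)
next
  case (insert l L)
  then have fl: "R k (f l)" and fL: "R k (\<Sum>l\<in>L. f l)"
    by (auto intro: R_sum)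
  with insert show ?case
    by (simp add: i_add[OF fl fL])
qed

lemma i_diff: "R k a \<Longrightarrow> R k b \<Longrightarrow> i (a - b) = i a - i b"
  using i_add[OF R_diff, of k a b b] by simp

lemma s_sum: "finite L \<Longrightarrow> (\<And>l. l \<in> L \<Longrightarrow> R k (f l)) \<Longrightarrow> s k (\<Sum>l\<in>L. f l) = (\<Sum>l\<in>L. s k (f l))"
proof (induction L rule: finite_induct)
  case empty
  show ?case
    by (simp add: s_zero)
next
  case (insert l L)
  then have fl: "R k (f l)" and fL: "R k (\<Sum>l\<in>L. f l)"
    by (auto intro: R_sum)
  with insert show ?case
    by (simp add: s_add[OF fl fL])
qed

lemma summand_0: "summand k 0 = {a. R k a \<and> i a = 0}"
  by (simp add: summand_def sp_0)

lemma summand_Suc: "summand (Suc k) (Suc l) = s k ` summand k l"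
  by (simp add: summand_def sp_Suc image_comp)

lemma R_summand: "l \<le> k \<Longrightarrow> a \<in> summand k l \<Longrightarrow> R k a"
proof (induction l arbitrary: k a)
  case 0
  then show ?case
    by (simp add: summand_0)
next
  case (Suc l)
  then obtain k' where "k = Suc k'"
    by (cases k) auto
  with Suc show ?case
    by (auto simp: summand_Suc intro: s_R)
qed

lemma R_sum_summands: "(\<And>l. l \<in> {0..k} \<Longrightarrow> f l \<in> summand k l) \<Longrightarrow> R k (\<Sum>l\<in>{0..k}. f l)"
  by (intro R_sum) (auto intro: R_summand)

lemma sum_summands:
  "k \<le> K \<Longrightarrow> R k a \<Longrightarrow> \<exists>f. (\<forall>l\<in>{0..k}. f l \<in> summand k l) \<and> a = (\<Sum>l\<in>{0..k}. f l)"
proof (induction k arbitrary: a)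
  case 0
  then show ?case
    by (intro exI[of _ "\<lambda>_. a"]) (simp add: summand_0 i_R_0)
next
  case (Suc k)
  have ia: "R k (i a)"
    using Suc.prems by (intro i_R)
  obtain g where g: "\<forall>l\<in>{0..k}. g l \<in> summand k l" "i a = (\<Sum>l\<in>{0..k}. g l)"
    using Suc.IH[OF _ ia] Suc.prems by auto
  have s_sum_g: "s k (\<Sum>l\<in>{0..k}. g l) = (\<Sum>l\<in>{0..k}. s k (g l))"
    using g(1) by (intro s_sum) (auto intro: R_summand)
  define f where "f l = (if l = 0 then a - s k (i a) else s k (g (l - 1)))" for l
  have "f 0 \<in> summand (Suc k) 0"
    using Suc.prems ia by (simp add: f_def summand_0 R_diff s_R i_diff i_s)
  moreover have "f (Suc l) \<in> summand (Suc k) (Suc l)" if "l \<in> {0..k}" for l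
    using g(1) that by (simp add: f_def summand_Suc)
  ultimately have "\<forall>l\<in>{0..Suc k}. f l \<in> summand (Suc k) l"
    by (simp add: ball_atLeast0_atMost_Suc)
  moreover have "(\<Sum>l\<in>{0..Suc k}. f l) = a"
  proof -
    have "(\<Sum>l\<in>{0..Suc k}. f l) = f 0 + (\<Sum>l\<in>{0..k}. f (Suc l))"
      unfolding sum.atLeast0_atMost_Suc_shift o_def ..
    also have "(\<Sum>l\<in>{0..k}. f (Suc l)) = s k (i a)"
      by (simp add: f_def g(2) s_sum_g)
    finally show ?thesis
      by (simp add: f_def)
  qed
  ultimately show ?case
    by blast
qed

lemma summands_independent:
  "k \<le> K \<Longrightarrow> \<forall>l\<in>{0..k}. f l \<in> summand k l \<Longrightarrow> (\<Sum>l\<in>{0..k}. f l) = 0 \<Longrightarrow> \<forall>l\<in>{0..k}. f l = 0"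
proof (induction k arbitrary: f)
  case 0
  then show ?case
    by simp
next
  case (Suc k)
  have "\<exists>g. g \<in> summand k l \<and> f (Suc l) = s k g" if "l \<in> {0..k}" for l
  proof -
    have "f (Suc l) \<in> summand (Suc k) (Suc l)"
      using Suc.prems(2) that by simp
    then show ?thesis
      by (auto simp: summand_Suc)
  qed
  then obtain g where g: "\<And>l. l \<in> {0..k} \<Longrightarrow> g l \<in> summand k l \<and> f (Suc l) = s k (g l)"
    by metis
  have "f 0 \<in> summand (Suc k) 0"
    using Suc.prems(2) by simp
  then have i_f0: "i (f 0) = 0"
    by (simp add: summand_0)
  have i_fSuc: "i (f (Suc l)) = g l" if "l \<in> {0..k}" for l
    using g[OF that] Suc.prems(1) R_summand[of l k "g l"] that by (simp add: i_s)
  have "0 = i (\<Sum>l\<in>{0..Suc k}. f l)"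
    using Suc.prems(3) by (simp add: i_zero)
  also have "\<dots> = (\<Sum>l\<in>{0..Suc k}. i (f l))"
    using Suc.prems(2) by (intro i_sum) (auto intro: R_summand)
  also have "\<dots> = i (f 0) + (\<Sum>l\<in>{0..k}. i (f (Suc l)))"
    unfolding sum.atLeast0_atMost_Suc_shift o_def ..
  also have "\<dots> = (\<Sum>l\<in>{0..k}. g l)"
    by (simp add: i_f0, intro sum.cong refl i_fSuc)
  finally have "(\<Sum>l\<in>{0..k}. g l) = 0"
    by simp
  moreover have "\<forall>l\<in>{0..k}. g l \<in> summand k l"
    using g by blast
  ultimately have "\<forall>l\<in>{0..k}. g l = 0"
    using Suc.IH Suc.prems(1) by simp
  then have f_Suc: "f (Suc l) = 0" if "l \<in> {0..k}" for l
    using g[OF that] that by (simp add: s_zero)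
  moreover have "(\<Sum>l\<in>{0..Suc k}. f l) = f 0 + (\<Sum>l\<in>{0..k}. f (Suc l))"
    unfolding sum.atLeast0_atMost_Suc_shift o_def ..
  ultimately have "f 0 = 0"
    using Suc.prems(3) by simp
  with f_Suc show ?case
    by (simp add: ball_atLeast0_atMost_Suc)
qed


theorem direct_sum_decomposition:
  assumes "k \<le> K"
  shows "(\<forall>a. R k a \<longleftrightarrow> (\<exists>f. (\<forall>l\<in>{0..k}. f l \<in> summand k l) \<and> a = (\<Sum>l\<in>{0..k}. f l)))
    \<and> (\<forall>f. (\<forall>l\<in>{0..k}. f l \<in> summand k l) \<and> (\<Sum>l\<in>{0..k}. f l) = 0 \<longrightarrow> (\<forall>l\<in>{0..k}. f l = 0))"
proof (intro conjI allI impI iffI)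
  fix a
  show "R k a \<Longrightarrow> \<exists>f. (\<forall>l\<in>{0..k}. f l \<in> summand k l) \<and> a = (\<Sum>l\<in>{0..k}. f l)"
    by (rule sum_summands[OF assms])
  show "\<exists>f. (\<forall>l\<in>{0..k}. f l \<in> summand k l) \<and> a = (\<Sum>l\<in>{0..k}. f l) \<Longrightarrow> R k a"
    using R_sum_summands by auto
next
  fix f
  show "(\<forall>l\<in>{0..k}. f l \<in> summand k l) \<and> (\<Sum>l\<in>{0..k}. f l) = 0 \<Longrightarrow> \<forall>l\<in>{0..k}. f l = 0"
    using summands_independent[OF assms] by blast
qed
end

lemma graded_right_inverse_ialpha_smap:
  assumes "\<forall>j\<in>{1..K}. \<forall>p\<in>{j-1..2*j-2}. \<delta> \<noteq> - real p / (2 * (real CARD('n::finite) + 1))"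
  shows "graded_right_inverse (inR :: nat \<Rightarrow> 'n sym \<Rightarrow> bool) ialpha (smap \<delta>) (spow \<delta>) K"
proof (unfold_locales)
  fix k :: nat and a b :: "'n sym"
  show "inR k 0"
    using inR_zero by (simp add: zero_fun_def)
  show "inR k (a - b)" if "inR k a" "inR k b"
    using inR_diff[OF that] by (simp add: fun_diff_def)
  show "inR k (ialpha a)" if "inR (Suc k) a"
    using inR_ialpha[OF that] by simp
  show "ialpha a = 0" if "inR 0 a"
    using ialpha_inR_0[OF that] by (simp add: zero_fun_def)
  show "ialpha (a + b) = ialpha a + ialpha b" if "inR k a" "inR k b"
    using ialpha_add[OF that] by (simp add: plus_fun_def)
  show "inR (Suc k) (smap \<delta> k a)" if "inR k a"
    using inR_smap[OF that] by simp
  show "smap \<delta> k (a + b) = smap \<delta> k a + smap \<delta> k b" if "inR k a" "inR k b"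
    using smap_add[OF that] by (simp add: plus_fun_def)
  show "ialpha (smap \<delta> k a) = a" if "k < K" "inR k a"
    using that rr_nonzero[OF assms, of "k + 1"] by (intro ialpha_smap) auto
qed simp_all

theorem corollary5p2:
  fixes \<delta> :: real and k :: nat
  assumes "k \<ge> 1"
    and "\<forall>j\<in>{1..k}. \<forall>p\<in>{j-1..2*j-2}. \<delta> \<noteq> - real p / (2 * (real CARD('n::finite) + 1))"
  shows "(\<forall>S :: 'n sym. inR k S \<longleftrightarrow>
            (\<exists>f. (\<forall>l\<in>{0..k}. f l \<in> Wsum \<delta> k l) \<and> S = (\<Sum>l\<in>{0..k}. f l)))
       \<and> (\<forall>f :: nat \<Rightarrow> 'n sym. (\<forall>l\<in>{0..k}. f l \<in> Wsum \<delta> k l) \<and> (\<Sum>l\<in>{0..k}. f l) = 0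
            \<longrightarrow> (\<forall>l\<in>{0..k}. f l = 0))"
proof -
  interpret graded_right_inverse "inR :: nat \<Rightarrow> 'n sym \<Rightarrow> bool" ialpha "smap \<delta>" "spow \<delta>" k
    by (rule graded_right_inverse_ialpha_smap[OF assms(2)])
  have Wsum_eq: "Wsum \<delta> k = summand k"
    by (simp add: fun_eq_iff Wsum_def summand_def)
  show ?thesis
    unfolding Wsum_eq by (rule direct_sum_decomposition[OF order.refl])
qed

end
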